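(* Let $H:\mathbb{R}^{2d}\to\mathbb{R}$ be continuous with $H(q,-p)=H(q,p)$, and let $\Psi:\mathbb{R}^{2d}\to\mathbb{R}^{2d}$ be a continuous bijection that preserves Lebesgue measure and is reversible with respect to $S(q,p)=(q,-p)$. Let $\Delta=H\circ\Psi-H$. If $m_\Delta=\int_{\mathbb{R}^{2d}}\Delta(q,p)e^{-H(q,p)}dq\,dp$ exists, then $$0\le m_\Delta\le\int_{\mathbb{R}^{2d}}\Delta(q,p)^2e^{-H(q,p)}dq\,dp,$$ and the first inequality is strict unless $\Delta$ vanishes identically. *)

theory Defs
  imports "HOL-Analysis.Analysis"
begin

text \<open>Points of R^{2d} are pairs (q,p) with q,p in R^d; d is encoded by the finite index type 'd.
  The momentum flip S(q,p) = (q,-p).\<close>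
definition momflip :: "((real^'d) \<times> (real^'d)) \<Rightarrow> ((real^'d) \<times> (real^'d))" where
  "momflip x = (fst x, - snd x)"

end

theory Submission
  imports Defs
begin

text \<open>With \<open>S\<close> the momentum flip, \<open>T = S \<circ> \<Psi>\<close> preserves Lebesgue measure,
  \<open>H \<circ> T = H \<circ> \<Psi>\<close> since \<open>H\<close> is even in \<open>p\<close>, and reversibility gives \<open>\<Psi> \<circ> T = S\<close>, hence
  \<open>\<Delta> \<circ> T = - \<Delta>\<close>. Substituting \<open>x \<mapsto> T x\<close> turns \<open>m = \<integral> \<Delta> exp (- H)\<close> into
  \<open>- \<integral> \<Delta> exp (- \<Delta>) exp (- H)\<close>. Averaging, \<open>2 m = \<integral> \<Delta> (1 - exp (- \<Delta>)) exp (- H)\<close>, whose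
  integrand is nonnegative and at most \<open>\<Delta>\<^sup>2 (1 + exp (- \<Delta>)) exp (- H)\<close>; the same substitution
  shows that both halves of the latter integrate to \<open>\<integral> \<Delta>\<^sup>2 exp (- H)\<close>. If \<open>m = 0\<close>, the
  continuous nonnegative integrand vanishes almost everywhere, hence everywhere.\<close>

lemma mult_one_minus_exp_neg_nonneg:
  fixes t :: real
  shows "0 \<le> t * (1 - exp (- t))"
  by (cases "t \<ge> 0") (auto simp: mult_nonpos_nonpos)

lemma mult_one_minus_exp_neg_eq_0_iff:
  fixes t :: real
  shows "t * (1 - exp (- t)) = 0 \<longleftrightarrow> t = 0"
  by auto

lemma mult_one_minus_exp_neg_le:
  fixes t :: real
  shows "t * (1 - exp (- t)) \<le> t\<^sup>2 * (1 + exp (- t))"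
proof (cases "t \<ge> 0")
  case True
  have "1 - exp (- t) \<le> t"
    using exp_ge_add_one_self[of "- t"] by simp
  then have "t * (1 - exp (- t)) \<le> t * t"
    using True by (simp add: mult_left_mono)
  also have "\<dots> \<le> t\<^sup>2 * (1 + exp (- t))"
    using mult_left_mono[of 1 "1 + exp (- t)" "t * t"] by (simp add: power2_eq_square)
  finally show ?thesis .
next
  case False
  have "exp (- t) * (1 + t) \<le> exp (- t) * exp t"
    using exp_ge_add_one_self[of t] by (intro mult_left_mono) auto
  then have "exp (- t) - 1 \<le> - t * (1 + exp (- t))"
    using False by (simp add: algebra_simps exp_minus_inverse)
  then have "- t * (exp (- t) - 1) \<le> - t * (- t * (1 + exp (- t)))"
    using False by (intro mult_left_mono) auto
  then show ?thesis
    by (simp add: power2_eq_square algebra_simps)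
qed

lemma distr_lborel_momflip:
  "distr lborel lborel (momflip :: (real^'d) \<times> (real^'d) \<Rightarrow> _) = lborel"
proof -
  have uminus: "distr lborel borel uminus = (lborel :: (real^'d) measure)"
    by (subst lborel_affine[of "-1" 0]) (auto simp: density_1 one_ennreal_def[symmetric])
  have id: "distr lborel borel id = (lborel :: (real^'d) measure)"
    by (simp add: id_def distr_id2)
  have "(lborel :: ((real^'d) \<times> (real^'d)) measure)
      = distr lborel borel id \<Otimes>\<^sub>M distr lborel borel uminus"
    by (simp add: lborel_prod uminus id)
  also have "\<dots> = distr (lborel \<Otimes>\<^sub>M lborel) (borel \<Otimes>\<^sub>M borel) (\<lambda>(x, y). (id x, - y))"
    by (rule pair_measure_distr) (auto simp: uminus intro: lborel.sigma_finite_measure_axioms)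
  also have "\<dots> = distr lborel lborel momflip"
  proof (rule distr_cong)
    show "sets (borel \<Otimes>\<^sub>M borel) = sets (lborel :: ((real^'d) \<times> (real^'d)) measure)"
      by (subst borel_prod) simp
  qed (simp_all add: lborel_prod momflip_def split_beta)
  finally show ?thesis ..
qed

lemma reversible_involution_apply:
  assumes "bij \<Psi>" and "\<And>x. S (S x) = x" and "S \<circ> \<Psi> \<circ> S = inv \<Psi>"
  shows "\<Psi> (S (\<Psi> x)) = S x"
proof -
  have "S (\<Psi> (S (\<Psi> x))) = x"
    using fun_cong[OF assms(3), of "\<Psi> x"] assms(1) by (simp add: bij_is_inj)
  then show ?thesis
    by (metis assms(2))
qed

lemma AE_lborel_continuous_imp_eq:
  fixes f g :: "'a::euclidean_space \<Rightarrow> 'b::real_normed_vector"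
  assumes "continuous_on UNIV f" and "continuous_on UNIV g"
    and "AE x in lborel. f x = g x"
  shows "f x = g x"
proof -
  let ?U = "{x. f x \<noteq> g x}"
  have "open ?U"
    using open_Collect_neq[OF assms(1,2)] by simp
  moreover have "AE x in lborel. x \<notin> ?U"
    using assms(3) by auto
  moreover have "?U \<in> sets lborel"
    using borel_open[OF \<open>open ?U\<close>] by simp
  ultimately have "?U \<in> null_sets lborel"
    using AE_iff_null_sets by blast
  then have "negligible ?U"
    unfolding negligible_iff_null_sets by (rule null_sets_completionI)
  with \<open>open ?U\<close> show ?thesis
    using open_not_negligible by blast
qed

locale detailed_balance =
  fixes M :: "'a measure" and T :: "'a \<Rightarrow> 'a" and D E :: "'a \<Rightarrow> real"
  assumes T_measurable: "T \<in> M \<rightarrow>\<^sub>M M"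
    and distr_T: "distr M M T = M"
    and D_measurable: "D \<in> borel_measurable M"
    and E_measurable: "E \<in> borel_measurable M"
    and D_T: "\<And>x. x \<in> space M \<Longrightarrow> D (T x) = - D x"
    and E_T: "\<And>x. x \<in> space M \<Longrightarrow> E (T x) = E x * exp (- D x)"
    and E_pos: "\<And>x. x \<in> space M \<Longrightarrow> 0 < E x"
begin

declare D_measurable [measurable] E_measurable [measurable]

lemma integrable_comp_T_iff: "integrable M (\<lambda>x. f (T x)) \<longleftrightarrow> integrable M f"
  if "f \<in> borel_measurable M" for f :: "'a \<Rightarrow> real"
  using integrable_distr_eq[OF T_measurable that] by (simp add: distr_T)

lemma integral_comp_T: "(\<integral>x. f (T x) \<partial>M) = (\<integral>x. f x \<partial>M)"
  if "f \<in> borel_measurable M" for f :: "'a \<Rightarrow> real"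
  using integral_distr[OF T_measurable that] by (simp add: distr_T)

lemma nn_integral_comp_T: "(\<integral>\<^sup>+x. f (T x) \<partial>M) = (\<integral>\<^sup>+x. f x \<partial>M)"
  if "f \<in> borel_measurable M" for f :: "'a \<Rightarrow> ennreal"
  using nn_integral_distr[OF T_measurable, of f] that by (simp add: distr_T)

context
  assumes integrable_DE: "integrable M (\<lambda>x. D x * E x)"
begin

lemma integrable_DE_exp: "integrable M (\<lambda>x. D x * E x * exp (- D x))"
proof -
  have "integrable M (\<lambda>x. D (T x) * E (T x))"
    using integrable_DE by (subst integrable_comp_T_iff) auto
  then have "integrable M (\<lambda>x. - (D x * E x * exp (- D x)))"
    by (rule Bochner_Integration.integrable_cong[THEN iffD1, rotated 2]) (simp_all add: D_T E_T)
  then show ?thesis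
    by simp
qed

lemma integral_DE_eq_neg_integral_DE_exp: "(\<integral>x. D x * E x \<partial>M) = - (\<integral>x. D x * E x * exp (- D x) \<partial>M)"
proof -
  have "(\<integral>x. D x * E x \<partial>M) = (\<integral>x. D (T x) * E (T x) \<partial>M)"
    by (subst integral_comp_T) auto
  also have "\<dots> = (\<integral>x. - (D x * E x * exp (- D x)) \<partial>M)"
    by (rule Bochner_Integration.integral_cong) (simp_all add: D_T E_T)
  finally show ?thesis
    by simp
qed

lemma integral_symmetrised:
  "integrable M (\<lambda>x. D x * (1 - exp (- D x)) * E x)"
  "(\<integral>x. D x * (1 - exp (- D x)) * E x \<partial>M) = 2 * (\<integral>x. D x * E x \<partial>M)"
proof -
  have eq: "D x * (1 - exp (- D x)) * E x = D x * E x - D x * E x * exp (- D x)" for x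
    by (simp add: algebra_simps)
  show "integrable M (\<lambda>x. D x * (1 - exp (- D x)) * E x)"
    unfolding eq using integrable_DE integrable_DE_exp by (rule Bochner_Integration.integrable_diff)
  show "(\<integral>x. D x * (1 - exp (- D x)) * E x \<partial>M) = 2 * (\<integral>x. D x * E x \<partial>M)"
    unfolding eq using integrable_DE integrable_DE_exp integral_DE_eq_neg_integral_DE_exp by simp
qed

lemma integral_DE_nonneg: "0 \<le> (\<integral>x. D x * E x \<partial>M)"
proof -
  have "0 \<le> (\<integral>x. D x * (1 - exp (- D x)) * E x \<partial>M)"
    using mult_one_minus_exp_neg_nonneg E_pos
    by (intro integral_nonneg_AE AE_I2) (simp add: less_imp_le)
  then show ?thesis
    by (simp add: integral_symmetrised)
qed

lemma nn_integral_symmetrised: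
  "(\<integral>\<^sup>+x. ennreal (D x * (1 - exp (- D x)) * E x) \<partial>M) = ennreal (2 * (\<integral>x. D x * E x \<partial>M))"
  using nn_integral_eq_integral[OF integral_symmetrised(1)] mult_one_minus_exp_neg_nonneg E_pos
  by (simp add: integral_symmetrised(2) less_imp_le)

lemma integral_DE_le_nn_integral_square:
  "ennreal (\<integral>x. D x * E x \<partial>M) \<le> (\<integral>\<^sup>+x. ennreal ((D x)\<^sup>2 * E x) \<partial>M)"
proof -
  let ?m = "\<integral>x. D x * E x \<partial>M" and ?X = "\<integral>\<^sup>+x. ennreal ((D x)\<^sup>2 * E x) \<partial>M"
  have E_nonneg: "x \<in> space M \<Longrightarrow> 0 \<le> E x" for x
    using E_pos less_imp_le by blast
  have X_exp: "(\<integral>\<^sup>+x. ennreal ((D x)\<^sup>2 * E x * exp (- D x)) \<partial>M) = ?X"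
  proof -
    have "?X = (\<integral>\<^sup>+x. ennreal ((D (T x))\<^sup>2 * E (T x)) \<partial>M)"
      by (subst nn_integral_comp_T) auto
    also have "\<dots> = (\<integral>\<^sup>+x. ennreal ((D x)\<^sup>2 * E x * exp (- D x)) \<partial>M)"
      by (rule nn_integral_cong) (simp add: D_T E_T mult.assoc)
    finally show ?thesis ..
  qed
  have "ennreal (2 * ?m) \<le> (\<integral>\<^sup>+x. ennreal ((D x)\<^sup>2 * E x) + ennreal ((D x)\<^sup>2 * E x * exp (- D x)) \<partial>M)"
    unfolding nn_integral_symmetrised[symmetric]
  proof (intro nn_integral_mono)
    fix x assume x: "x \<in> space M"
    have "D x * (1 - exp (- D x)) * E x \<le> (D x)\<^sup>2 * (1 + exp (- D x)) * E x"
      using mult_one_minus_exp_neg_le E_nonneg[OF x] by (rule mult_right_mono)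
    also have "\<dots> = (D x)\<^sup>2 * E x + (D x)\<^sup>2 * E x * exp (- D x)"
      by (simp add: algebra_simps)
    finally have "ennreal (D x * (1 - exp (- D x)) * E x)
        \<le> ennreal ((D x)\<^sup>2 * E x + (D x)\<^sup>2 * E x * exp (- D x))"
      by (rule ennreal_leI)
    also have "\<dots> = ennreal ((D x)\<^sup>2 * E x) + ennreal ((D x)\<^sup>2 * E x * exp (- D x))"
      using E_nonneg[OF x] by (intro ennreal_plus) auto
    finally show "ennreal (D x * (1 - exp (- D x)) * E x)
        \<le> ennreal ((D x)\<^sup>2 * E x) + ennreal ((D x)\<^sup>2 * E x * exp (- D x))" .
  qed
  also have "\<dots> = ?X + ?X"
    by (subst nn_integral_add) (auto simp: X_exp)
  finally have "ennreal ?m + ennreal ?m \<le> ?X + ?X"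
    using integral_DE_nonneg by (simp add: ennreal_plus[symmetric])
  then show ?thesis
    using add_strict_mono[of ?X "ennreal ?m" ?X "ennreal ?m"] by (meson not_le)
qed

lemma integral_DE_eq_0_imp_AE: "(\<integral>x. D x * E x \<partial>M) = 0 \<Longrightarrow> AE x in M. D x = 0"
proof -
  assume "(\<integral>x. D x * E x \<partial>M) = 0"
  then have "(\<integral>\<^sup>+x. ennreal (D x * (1 - exp (- D x)) * E x) \<partial>M) = 0"
    by (simp add: nn_integral_symmetrised)
  then have "AE x in M. ennreal (D x * (1 - exp (- D x)) * E x) = 0"
    by (subst (asm) nn_integral_0_iff_AE) auto
  then show "AE x in M. D x = 0"
  proof (rule AE_mp, intro AE_I2 impI)
    fix x assume x: "x \<in> space M" and "ennreal (D x * (1 - exp (- D x)) * E x) = 0"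
    then have "D x * (1 - exp (- D x)) * E x \<le> 0"
      by (simp add: ennreal_eq_0_iff)
    moreover have "0 \<le> D x * (1 - exp (- D x)) * E x"
      using E_pos[OF x] mult_one_minus_exp_neg_nonneg by simp
    ultimately have "D x * (1 - exp (- D x)) = 0"
      using E_pos[OF x] by (metis order.antisym mult_eq_0_iff order_less_irrefl)
    then show "D x = 0"
      by (simp only: mult_one_minus_exp_neg_eq_0_iff)
  qed
qed

end

end

lemma reversible_detailed_balance:
  fixes H :: "((real^'d) \<times> (real^'d)) \<Rightarrow> real"
    and \<Psi> :: "((real^'d) \<times> (real^'d)) \<Rightarrow> ((real^'d) \<times> (real^'d))"
  assumes H_measurable: "H \<in> borel_measurable borel"
    and H_even: "\<And>q p. H (q, - p) = H (q, p)"
    and \<Psi>_bij: "bij \<Psi>"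
    and \<Psi>_measurable: "\<Psi> \<in> lborel \<rightarrow>\<^sub>M lborel"
    and \<Psi>_vol: "distr lborel lborel \<Psi> = lborel"
    and \<Psi>_rev: "momflip \<circ> \<Psi> \<circ> momflip = inv \<Psi>"
  shows "detailed_balance lborel (momflip \<circ> \<Psi>) (\<lambda>x. H (\<Psi> x) - H x) (\<lambda>x. exp (- H x))"
proof -
  have momflip_momflip: "momflip (momflip x) = x" for x :: "(real^'d) \<times> (real^'d)"
    by (simp add: momflip_def)
  have H_momflip: "H (momflip x) = H x" for x
    by (cases x) (simp add: momflip_def H_even)
  have \<Psi>_T: "\<Psi> (momflip (\<Psi> x)) = momflip x" for x
    using reversible_involution_apply[OF \<Psi>_bij momflip_momflip \<Psi>_rev] .
  have momflip_measurable: "momflip \<in> lborel \<rightarrow>\<^sub>M (lborel :: ((real^'d) \<times> (real^'d)) measure)"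
    unfolding momflip_def by simp (intro borel_measurable_continuous_onI continuous_intros)
  have [measurable]: "H \<in> borel_measurable lborel" "\<Psi> \<in> lborel \<rightarrow>\<^sub>M lborel"
    using H_measurable \<Psi>_measurable by simp_all
  show ?thesis
  proof
    show "momflip \<circ> \<Psi> \<in> lborel \<rightarrow>\<^sub>M lborel"
      using \<Psi>_measurable momflip_measurable by (rule measurable_comp)
    show "distr lborel lborel (momflip \<circ> \<Psi>) = lborel"
      using distr_distr[OF momflip_measurable \<Psi>_measurable] by (simp add: \<Psi>_vol distr_lborel_momflip)
  qed (auto simp: \<Psi>_T H_momflip exp_add[symmetric])
qed

theorem theorem6p1:
  fixes H :: "((real^'d) \<times> (real^'d)) \<Rightarrow> real"
    and \<Psi> :: "((real^'d) \<times> (real^'d)) \<Rightarrow> ((real^'d) \<times> (real^'d))"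
  assumes H_cont: "continuous_on UNIV H"
    and H_even: "\<And>q p. H (q, - p) = H (q, p)"
    and \<Psi>_cont: "continuous_on UNIV \<Psi>"
    and \<Psi>_bij: "bij \<Psi>"
    and \<Psi>_meas: "\<Psi> \<in> lborel \<rightarrow>\<^sub>M lborel"
    and \<Psi>_vol: "distr lborel lborel \<Psi> = lborel"
    and \<Psi>_rev: "momflip \<circ> \<Psi> \<circ> momflip = inv \<Psi>"
    and int: "integrable lborel (\<lambda>x. (H (\<Psi> x) - H x) * exp (- H x))"
  shows "0 \<le> (\<integral>x. (H (\<Psi> x) - H x) * exp (- H x) \<partial>lborel)
    \<and> ennreal (\<integral>x. (H (\<Psi> x) - H x) * exp (- H x) \<partial>lborel)
        \<le> (\<integral>\<^sup>+x. ennreal ((H (\<Psi> x) - H x)\<^sup>2 * exp (- H x)) \<partial>lborel)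
    \<and> ((\<integral>x. (H (\<Psi> x) - H x) * exp (- H x) \<partial>lborel) = 0 \<longrightarrow> (\<forall>x. H (\<Psi> x) - H x = 0))"
proof -
  interpret detailed_balance lborel "momflip \<circ> \<Psi>" "\<lambda>x. H (\<Psi> x) - H x" "\<lambda>x. exp (- H x)"
    using reversible_detailed_balance[OF borel_measurable_continuous_onI[OF H_cont]
        H_even \<Psi>_bij \<Psi>_meas \<Psi>_vol \<Psi>_rev] .
  have \<Delta>_cont: "continuous_on UNIV (\<lambda>x. H (\<Psi> x) - H x)"
    by (intro continuous_intros continuous_on_compose2[OF H_cont \<Psi>_cont] H_cont) auto
  show ?thesis
    using integral_DE_nonneg[OF int] integral_DE_le_nn_integral_square[OF int]
      AE_lborel_continuous_imp_eq[OF \<Delta>_cont continuous_on_const]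
      integral_DE_eq_0_imp_AE[OF int]
    by blast
qed

end
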